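(* For every pacing function $\mu:\Theta\to\mathbb{R}_{\ge0}$, buyer type $(w,B)\in\Theta$ and $t\ge0$, the bidding function $b^*(\alpha):=\sigma^\mu_\alpha\big(w^T\alpha/(1+t)\big)$ is an optimal solution of $\max_{b:A\to\mathbb{R}_{\ge0}}\ \mathbb{E}_{\alpha,\{\theta_i\}_{i=1}^{n-1}}\Big[\Big(\frac{w^T\alpha}{1+t}-b(\alpha)\Big)\mathbf 1\{b(\alpha)\ge\max(r(\alpha),\{\beta^\mu(\theta_i,\alpha)\}_i)\}\Big]$, where $\alpha\sim F$, $\theta_1,\dots,\theta_{n-1}\sim G$ are i.i.d. and independent of $\alpha$, and the maximum is over measurable $b$.
   Context: Setting. Fix integers $n\ge 2$ and $d\ge 2$, and constants $U>0$, $B_{\min}>0$. Buyer types are $\theta=(w,B)\in\Theta:=(0,U)^d\times(B_{\min},U)$; $\Theta_w:=(0,U)^d$. Item types are $\alpha\in A\subset\mathbb{R}^d_{+}$ (strictly positive orthant); all sets carry the Lebesgue $\sigma$-algebra. $F$ is a probability distribution on $A$ with a density and $G$ a probability distribution on $\Theta$ with a density. Buyer $(w,B)$ values item $\alpha$ at $w^T\alpha$; $\omega>0$ is a constant with $w^T\alpha\le\omega$ for all $w\in\Theta_w,\alpha\in A$. Reserve prices: measurable $r:A\to(0,\infty)$. A pacing function is a measurable $\mu:\Theta\to\mathbb{R}_{\ge0}$. For $\alpha\in A$, $\lambda^\mu_\alpha$ is the distribution of $w^T\alpha/(1+\mu(w,B))$ when $(w,B)\sim G$, and $H^\mu_\alpha$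 the distribution of the maximum of $n-1$ i.i.d. draws from $\lambda^\mu_\alpha$; $H^\mu_\alpha(x):=\lambda^\mu_\alpha((-\infty,x])^{n-1}$. Define $\sigma^\mu_\alpha(x)=x$ if $x<r(\alpha)$; for $x\ge r(\alpha)$, $\sigma^\mu_\alpha(x)=x-\int_{r(\alpha)}^x \frac{H^\mu_\alpha(s)}{H^\mu_\alpha(x)}ds$ if $H^\mu_\alpha(x)>0$ and $\sigma^\mu_\alpha(x)=r(\alpha)$ if $H^\mu_\alpha(x)=0$. The value-pacing-based strategy is $\beta^\mu(w,B,\alpha):=\sigma^\mu_\alpha\big(w^T\alpha/(1+\mu(w,B))\big)$. *)

theory Defs
  imports "HOL-Probability.Probability"
begin

text \<open>Buyer types theta = (w, B) :: (real^'d) \<times> real; item types alpha :: real^'d.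
  Valuation w^T alpha is the inner product  fst theta \<bullet> alpha.\<close>

definition Theta :: "real \<Rightarrow> real \<Rightarrow> ((real^'d) \<times> real) set" where
  "Theta U Bmin = {(w, B). (\<forall>i. 0 < w $ i \<and> w $ i < U) \<and> Bmin < B \<and> B < U}"

definition Theta_w :: "real \<Rightarrow> (real^'d) set" where
  "Theta_w U = {w. \<forall>i. 0 < w $ i \<and> w $ i < U}"

definition lam :: "((real^'d) \<times> real) measure \<Rightarrow> ((real^'d) \<times> real \<Rightarrow> real) \<Rightarrow> real^'d \<Rightarrow> real measure" where
  "lam G \<mu> \<alpha> = distr G borel (\<lambda>\<theta>. (fst \<theta> \<bullet> \<alpha>) / (1 + \<mu> \<theta>))"

definition Hfun :: "nat \<Rightarrow> ((real^'d) \<times> real) measure \<Rightarrow> ((real^'d) \<times> real \<Rightarrow> real) \<Rightarrow> real^'d \<Rightarrow> real \<Rightarrow> real" where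
  "Hfun n G \<mu> \<alpha> x = (measure (lam G \<mu> \<alpha>) {..x}) ^ (n - 1)"

definition sigma_fun :: "nat \<Rightarrow> ((real^'d) \<times> real) measure \<Rightarrow> (real^'d \<Rightarrow> real) \<Rightarrow> ((real^'d) \<times> real \<Rightarrow> real)
    \<Rightarrow> real^'d \<Rightarrow> real \<Rightarrow> real" where
  "sigma_fun n G r \<mu> \<alpha> x =
     (if x < r \<alpha> then x
      else if Hfun n G \<mu> \<alpha> x > 0
        then x - integral {r \<alpha>..x} (\<lambda>s. Hfun n G \<mu> \<alpha> s / Hfun n G \<mu> \<alpha> x)
        else r \<alpha>)"

definition beta_fun :: "nat \<Rightarrow> ((real^'d) \<times> real) measure \<Rightarrow> (real^'d \<Rightarrow> real) \<Rightarrow> ((real^'d) \<times> real \<Rightarrow> real)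
    \<Rightarrow> (real^'d) \<times> real \<Rightarrow> real^'d \<Rightarrow> real" where
  "beta_fun n G r \<mu> \<theta> \<alpha> = sigma_fun n G r \<mu> \<alpha> ((fst \<theta> \<bullet> \<alpha>) / (1 + \<mu> \<theta>))"

definition payoff :: "nat \<Rightarrow> ((real^'d) \<times> real) measure \<Rightarrow> (real^'d \<Rightarrow> real) \<Rightarrow> ((real^'d) \<times> real \<Rightarrow> real)
    \<Rightarrow> (real^'d \<Rightarrow> real) \<Rightarrow> (real^'d \<Rightarrow> real) \<Rightarrow> (real^'d) \<times> (nat \<Rightarrow> (real^'d) \<times> real) \<Rightarrow> real" where
  "payoff n G r \<mu> v b z =
     (let \<alpha> = fst z; \<theta>s = snd z in
       (v \<alpha> - b \<alpha>) *
       (if r \<alpha> \<le> b \<alpha> \<and> (\<forall>i<n - 1. beta_fun n G r \<mu> (\<theta>s i) \<alpha> \<le> b \<alpha>) then 1 else 0))"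

text \<open>Expectation of a real random variable as an extended real (positive part minus
  negative part); it is well defined whenever one of the two parts is finite.\<close>
definition ext_expect :: "'a measure \<Rightarrow> ('a \<Rightarrow> real) \<Rightarrow> ereal" where
  "ext_expect M f = enn2ereal (\<integral>\<^sup>+ x. ennreal (f x) \<partial>M) - enn2ereal (\<integral>\<^sup>+ x. ennreal (- f x) \<partial>M)"

end

theory Submission
  imports Defs
begin

text \<open>Conditioning on the item \<open>\<alpha>\<close> and integrating out the \<open>n - 1\<close> independent rivals, the
  expected utility of a bid \<open>b\<close> is \<open>(v - b) \<cdot> P(win | b)\<close>, where the rival bids are
  \<open>\<sigma>(X)\<close> with \<open>X \<sim> \<lambda>\<^sup>\<mu>\<^sub>\<alpha>\<close> and \<open>P(win | b) = 1{r \<le> b} \<cdot> \<lambda>\<^sup>\<mu>\<^sub>\<alpha>{\<sigma> \<le> b}\<^sup>n\<^sup>-\<^sup>1\<close>. With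
  \<open>H(x) = \<lambda>\<^sup>\<mu>\<^sub>\<alpha>(-\<infinity>, x]\<^sup>n\<^sup>-\<^sup>1\<close> and \<open>J = \<integral>\<^sub>r\<^sup>v H\<close>, the bid \<open>\<sigma>(v)\<close> gains at least
  \<open>(v - \<sigma>(v)) H(v) = J\<close>, because \<open>\<sigma>\<close> is monotone. Any other bid \<open>b\<close> wins against values in the
  down-closed set \<open>{\<sigma> \<le> b}\<close>; for every \<open>y\<close> in it \<open>\<sigma>(y) \<le> b\<close> gives
  \<open>(v - b) H(y) \<le> (v - y) H(y) + \<integral>\<^sub>r\<^sup>y H \<le> J\<close>, and letting \<open>y\<close> exhaust the set bounds the gain
  of \<open>b\<close> by \<open>J\<close>. So \<open>\<sigma>(v)\<close> is optimal for every \<open>\<alpha>\<close>, hence in expectation.\<close>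

section \<open>Bid shading against a monotone distribution function\<close>

definition shade :: "(real \<Rightarrow> real) \<Rightarrow> real \<Rightarrow> real \<Rightarrow> real" where
  "shade H r x = (if x < r then x else if H x > 0 then x - integral {r..x} H / H x else r)"

lemma mono_imp_integrable_on: "mono (H :: real \<Rightarrow> real) \<Longrightarrow> H integrable_on {a..b}"
  by (rule integrable_on_mono_on) (simp add: mono_on_def monoD)

lemma integral_mono_increment_ge:
  fixes H :: "real \<Rightarrow> real"
  assumes H: "mono H" and "r \<le> y" "r \<le> v"
  shows "(v - y) * H y \<le> integral {r..v} H - integral {r..y} H"
proof (cases "y \<le> v")
  case True
  have "integral {r..y} H + integral {y..v} H = integral {r..v} H"
    by (rule Henstock_Kurzweil_Integration.integral_combine[OF \<open>r \<le> y\<close> True mono_imp_integrable_on[OF H]])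
  moreover have "integral {y..v} (\<lambda>_. H y) \<le> integral {y..v} H"
    by (rule integral_le) (auto intro: mono_imp_integrable_on[OF H] monoD[OF H])
  ultimately show ?thesis using True by simp
next
  case False
  have "integral {r..v} H + integral {v..y} H = integral {r..y} H"
    using False by (intro Henstock_Kurzweil_Integration.integral_combine[OF \<open>r \<le> v\<close> _ mono_imp_integrable_on[OF H]]) auto
  moreover have "integral {v..y} H \<le> integral {v..y} (\<lambda>_. H y)"
    by (rule integral_le) (auto intro: mono_imp_integrable_on[OF H] monoD[OF H])
  ultimately show ?thesis using False by (simp add: algebra_simps)
qed

lemma integral_mono_bounds:
  fixes H :: "real \<Rightarrow> real"
  assumes H: "mono H" "\<And>x. 0 \<le> H x" and "r \<le> x"
  shows "0 \<le> integral {r..x} H" "integral {r..x} H \<le> (x - r) * H x"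
proof -
  show "0 \<le> integral {r..x} H"
    by (rule integral_nonneg) (auto intro: mono_imp_integrable_on H)
  show "integral {r..x} H \<le> (x - r) * H x"
    using integral_mono_increment_ge[OF H(1) \<open>r \<le> x\<close>, of r] by (simp add: algebra_simps)
qed

lemma shade_bounds:
  fixes H :: "real \<Rightarrow> real"
  assumes H: "mono H" "\<And>x. 0 \<le> H x" and "r \<le> x"
  shows "r \<le> shade H r x" "shade H r x \<le> x"
proof -
  note J = integral_mono_bounds[OF H \<open>r \<le> x\<close>]
  show "r \<le> shade H r x"
  proof (cases "H x > 0")
    case True
    then have "integral {r..x} H / H x \<le> x - r"
      using J(2) by (simp add: divide_le_eq mult.commute)
    then show ?thesis using True \<open>r \<le> x\<close> by (simp add: shade_def)
  qed (use \<open>r \<le> x\<close> in \<open>auto simp: shade_def\<close>)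
  show "shade H r x \<le> x"
    using J(1) \<open>r \<le> x\<close> H(2)[of x] by (auto simp: shade_def)
qed

lemma mono_shade:
  fixes H :: "real \<Rightarrow> real"
  assumes H: "mono H" "\<And>x. 0 \<le> H x"
  shows "mono (shade H r)"
proof
  fix x y :: real assume "x \<le> y"
  show "shade H r x \<le> shade H r y"
  proof (cases "x < r")
    case True
    then show ?thesis
      using shade_bounds[OF H, of r y] \<open>x \<le> y\<close> by (cases "y < r") (auto simp: shade_def)
  next
    case False
    then have rx: "r \<le> x" and ry: "r \<le> y" using \<open>x \<le> y\<close> by auto
    show ?thesis
    proof (cases "H x > 0")
      case False
      then show ?thesis using rx shade_bounds(1)[OF H ry] by (simp add: shade_def)
    next
      case True
      have Hxy: "H x \<le> H y" using monoD[OF H(1) \<open>x \<le> y\<close>] .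
      have "integral {r..y} H / H y \<le> integral {r..x} H / H y + (y - x)"
        using integral_mono_increment_ge[OF H(1) ry rx] True Hxy
        by (simp add: divide_simps algebra_simps)
      also have "integral {r..x} H / H y \<le> integral {r..x} H / H x"
        using True Hxy integral_mono_bounds(1)[OF H rx] by (simp add: frac_le)
      finally show ?thesis using True Hxy rx ry by (simp add: shade_def not_less)
    qed
  qed
qed

lemma shade_le_imp_gain_le_integral:
  fixes H :: "real \<Rightarrow> real"
  assumes H: "mono H" "\<And>x. 0 \<le> H x" and "r \<le> y" "shade H r y \<le> b" "b < v" "r \<le> v"
  shows "(v - b) * H y \<le> integral {r..v} H"
proof (cases "H y > 0")
  case False
  then show ?thesis using H(2)[of y] integral_mono_bounds(1)[OF H \<open>r \<le> v\<close>] by simp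
next
  case True
  have "(v - b) * H y \<le> (v - shade H r y) * H y"
    using True \<open>shade H r y \<le> b\<close> by (intro mult_right_mono) auto
  also have "\<dots> = (v - y) * H y + integral {r..y} H"
    using True \<open>r \<le> y\<close> by (simp add: shade_def algebra_simps)
  also have "\<dots> \<le> integral {r..v} H"
    using integral_mono_increment_ge[OF H(1) \<open>r \<le> y\<close> \<open>r \<le> v\<close>] by simp
  finally show ?thesis .
qed

lemma down_closed_eq_Union_atMost:
  fixes S :: "real set"
  assumes "S \<noteq> {}" and down: "\<And>x y. y \<in> S \<Longrightarrow> x \<le> y \<Longrightarrow> x \<in> S"
  obtains Y :: "nat \<Rightarrow> real" where "\<And>i. Y i \<in> S" "incseq Y" "(\<Union>i. {..Y i}) = S"
proof (cases "bdd_above S")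
  case False
  have S: "real i \<in> S" for i
    using False down by (meson bdd_above_def linorder_not_le order.strict_implies_order)
  have "(\<Union>i. {..real i}) = S"
    using S down real_arch_simple by fastforce
  then show ?thesis by (intro that[of real, OF S]) (auto simp: incseq_def)
next
  case bdd: True
  show ?thesis
  proof (cases "Sup S \<in> S")
    case True
    have "(\<Union>i::nat. {..Sup S}) = S" using True down cSup_upper[OF _ bdd] by auto
    then show ?thesis by (intro that[of "\<lambda>_. Sup S"]) (use True in \<open>auto simp: incseq_def\<close>)
  next
    case False
    define Y where "Y i = Sup S - 1 / (real i + 1)" for i :: nat
    have S: "Y i \<in> S" for i
    proof -
      have "Y i < Sup S" unfolding Y_def by simp
      then obtain z where "z \<in> S" "Y i < z" using less_cSup_iff[OF \<open>S \<noteq> {}\<close> bdd] by blast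
      then show ?thesis using down by auto
    qed
    have "incseq Y" unfolding incseq_def Y_def
      by (auto intro!: divide_left_mono mult_pos_pos simp: field_simps)
    moreover have "(\<Union>i. {..Y i}) = S"
    proof
      show "(\<Union>i. {..Y i}) \<subseteq> S" using S down by auto
      show "S \<subseteq> (\<Union>i. {..Y i})"
      proof
        fix x assume x: "x \<in> S"
        then have "x < Sup S" using False cSup_upper[OF x bdd] by (metis order.order_iff_strict)
        then obtain i :: nat where "1 / (real i + 1) < Sup S - x"
          by (metis diff_gt_0_iff_gt nat_approx_posE of_nat_Suc add.commute)
        then have "x \<le> Y i" unfolding Y_def by simp
        then show "x \<in> (\<Union>i. {..Y i})" by auto
      qed
    qed
    ultimately show ?thesis by (rule that[OF S])
  qed
qed

lemma continuous_measure_down_closed_le: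
  fixes L :: "real measure" and \<phi> :: "real \<Rightarrow> real"
  assumes "finite_measure L" "sets L = sets borel"
    and "S \<noteq> {}" "\<And>x y. y \<in> S \<Longrightarrow> x \<le> y \<Longrightarrow> x \<in> S"
    and "continuous_on UNIV \<phi>" "\<And>y. y \<in> S \<Longrightarrow> \<phi> (measure L {..y}) \<le> c"
  shows "\<phi> (measure L S) \<le> c"
proof -
  interpret finite_measure L by fact
  obtain Y where Y: "\<And>i. Y i \<in> S" "incseq Y" "(\<Union>i. {..Y i}) = S"
    using down_closed_eq_Union_atMost[of S, OF assms(3)] assms(4) by blast
  have "(\<lambda>i. measure L {..Y i}) \<longlonglongrightarrow> measure L S"
    unfolding Y(3)[symmetric]
    by (rule finite_Lim_measure_incseq) (use assms(2) Y(2) in \<open>auto simp: incseq_def monoD\<close>)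
  then have "(\<lambda>i. \<phi> (measure L {..Y i})) \<longlonglongrightarrow> \<phi> (measure L S)"
    using continuous_on_tendsto_compose[OF assms(5)] by simp
  then show ?thesis by (rule LIMSEQ_le_const2) (use assms(6) Y(1) in auto)
qed

text \<open>Below, \<open>H = L(-\<infinity>, x]\<^sup>k\<close> is the distribution function of the highest of \<open>k\<close> independent
  rival values drawn from \<open>L\<close>.\<close>

lemma mono_measure_atMost_power:
  "finite_measure (L :: real measure) \<Longrightarrow> sets L = sets borel \<Longrightarrow> mono (\<lambda>x. measure L {..x} ^ k)"
  by (intro monoI power_mono finite_measure.finite_measure_mono) (simp_all add: atMost_subset_iff)

lemma integral_le_shade_gain:
  fixes L :: "real measure"
  assumes L: "prob_space L" "sets L = sets borel"
    and H_def: "H = (\<lambda>x. measure L {..x} ^ k)" and "r \<le> v"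
  shows "integral {r..v} H
    \<le> (v - shade H r v) * (if r \<le> shade H r v then 1 else 0) * measure L {x. shade H r x \<le> shade H r v} ^ k"
proof -
  interpret prob_space L by fact
  have H: "mono H" "\<And>x. 0 \<le> H x"
    unfolding H_def by (simp_all add: mono_measure_atMost_power[OF finite_measure_axioms L(2)])
  have s_meas: "shade H r \<in> borel_measurable borel"
    by (rule borel_measurable_mono[OF mono_shade[OF H]])
  note bounds = shade_bounds[OF H \<open>r \<le> v\<close>]
  have "measure L {..v} \<le> measure L {x. shade H r x \<le> shade H r v}"
    using monoD[OF mono_shade[OF H, of r]] s_meas L(2)
    by (intro finite_measure_mono) (auto simp: measurable_sets_borel)
  then have "(v - shade H r v) * H v \<le> (v - shade H r v) * measure L {x. shade H r x \<le> shade H r v} ^ k"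
    using bounds by (intro mult_left_mono) (auto simp: H_def power_mono)
  moreover have "integral {r..v} H \<le> (v - shade H r v) * H v"
    using H(2)[of v] integral_mono_bounds[OF H \<open>r \<le> v\<close>] \<open>r \<le> v\<close>
    by (cases "H v > 0") (auto simp: shade_def)
  ultimately show ?thesis using bounds by simp
qed

lemma gain_le_integral:
  fixes L :: "real measure"
  assumes L: "prob_space L" "sets L = sets borel"
    and H_def: "H = (\<lambda>x. measure L {..x} ^ k)" and "r \<le> v"
  shows "(v - b) * (if r \<le> b then 1 else 0) * measure L {x. shade H r x \<le> b} ^ k \<le> integral {r..v} H"
proof -
  interpret prob_space L by fact
  have H: "mono H" "\<And>x. 0 \<le> H x"
    unfolding H_def by (simp_all add: mono_measure_atMost_power[OF finite_measure_axioms L(2)])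
  have J: "0 \<le> integral {r..v} H" by (rule integral_mono_bounds(1)[OF H \<open>r \<le> v\<close>])
  show ?thesis
  proof (cases "r \<le> b \<and> b < v")
    case False
    then show ?thesis
      using J by (auto intro!: order.trans[OF mult_nonpos_nonneg[of "v - b" "prob {x. shade H r x \<le> b} ^ k"]])
  next
    case True
    define S where "S = {x. shade H r x \<le> b}"
    have rS: "r \<in> S" using True by (simp add: S_def shade_def)
    have "(\<lambda>p. (v - b) * p ^ k) (measure L S) \<le> integral {r..v} H"
    proof (rule continuous_measure_down_closed_le[OF finite_measure_axioms L(2)])
      show "S \<noteq> {}" using rS by auto
      show "x \<in> S" if "y \<in> S" "x \<le> y" for x y
        using that monoD[OF mono_shade[OF H, of r], of x y] by (auto simp: S_def)
      show "continuous_on UNIV (\<lambda>p. (v - b) * p ^ k)" by (intro continuous_intros)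
    next
      fix y assume "y \<in> S"
      define y' where "y' = max y r"
      have "shade H r y' \<le> b" using \<open>y \<in> S\<close> rS by (simp add: S_def y'_def max_def)
      have "measure L {..y} \<le> measure L {..y'}"
        by (rule finite_measure_mono) (auto simp: L(2) y'_def)
      then have "(v - b) * measure L {..y} ^ k \<le> (v - b) * H y'"
        using True by (intro mult_left_mono) (auto simp: H_def power_mono)
      also have "\<dots> \<le> integral {r..v} H"
        by (rule shade_le_imp_gain_le_integral[OF H _ \<open>shade H r y' \<le> b\<close>])
          (use True \<open>r \<le> v\<close> in \<open>auto simp: y'_def\<close>)
      finally show "(v - b) * measure L {..y} ^ k \<le> integral {r..v} H" .
    qed
    then show ?thesis using True by (simp add: S_def)
  qed
qed

lemma shade_maximizes_gain:
  fixes L :: "real measure"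
  assumes L: "prob_space L" "sets L = sets borel" and H_def: "H = (\<lambda>x. measure L {..x} ^ k)"
  shows "(v - b) * (if r \<le> b then 1 else 0) * measure L {x. shade H r x \<le> b} ^ k
     \<le> (v - shade H r v) * (if r \<le> shade H r v then 1 else 0) * measure L {x. shade H r x \<le> shade H r v} ^ k"
proof (cases "r \<le> v")
  case True
  then show ?thesis
    using gain_le_integral[OF L H_def] integral_le_shade_gain[OF L H_def] by (meson order.trans)
next
  case False
  then show ?thesis by (auto simp: shade_def intro!: mult_nonpos_nonneg)
qed

lemma enn2ereal_diff_le:
  fixes X Y Z :: ennreal
  assumes "X < \<top>" "X \<le> Z + Y"
  shows "enn2ereal X - enn2ereal Y \<le> enn2ereal Z"
proof (cases "Y = \<top> \<or> Z = \<top>")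
  case True
  then show ?thesis using assms(1) by (cases X) auto
next
  case False
  then obtain y z where "Y = ennreal y" "0 \<le> y" "Z = ennreal z" "0 \<le> z"
    by (metis ennreal_cases)
  moreover obtain x where "X = ennreal x" "0 \<le> x" using assms(1) by (cases X) auto
  ultimately show ?thesis using assms(2) by (simp flip: ennreal_plus)
qed

lemma nn_integral_bounded_less_top:
  assumes "prob_space M" "AE z in M. h z \<le> c"
  shows "(\<integral>\<^sup>+ z. ennreal (h z) \<partial>M) < \<top>"
proof -
  have "(\<integral>\<^sup>+ z. ennreal (h z) \<partial>M) \<le> (\<integral>\<^sup>+ z. ennreal c \<partial>M)"
    using assms(2) by (intro nn_integral_mono_AE) (auto intro: ennreal_leI)
  also have "\<dots> = ennreal c" using prob_space.emeasure_space_1[OF assms(1)] by simp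
  finally show ?thesis using order.strict_trans1 by fastforce
qed

lemma id_measurable_lebesgue_borel: "(\<lambda>x::'a::euclidean_space. x) \<in> lebesgue \<rightarrow>\<^sub>M borel"
  using id_borel_measurable_lebesgue by (simp add: id_def)

section \<open>Measurability of the value-pacing-based strategy\<close>

definition paced_value :: "((real^'d) \<times> real \<Rightarrow> real) \<Rightarrow> (real^'d) \<times> real \<Rightarrow> real^'d \<Rightarrow> real" where
  "paced_value \<mu> \<theta> \<alpha> = (fst \<theta> \<bullet> \<alpha>) / (1 + \<mu> \<theta>)"

lemma measurable_paced_value:
  assumes "\<mu> \<in> borel_measurable lebesgue"
    and "f \<in> M \<rightarrow>\<^sub>M lebesgue" "g \<in> M \<rightarrow>\<^sub>M lebesgue"
  shows "(\<lambda>q. paced_value \<mu> (f q) (g q)) \<in> borel_measurable M"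
proof -
  have fst_borel: "(fst :: (real^'d) \<times> real \<Rightarrow> real^'d) \<in> borel_measurable borel"
    by (rule borel_measurable_continuous_onI) (intro continuous_intros)
  have [measurable]: "(\<lambda>q. fst (f q)) \<in> borel_measurable M"
    using measurable_compose[OF measurable_compose[OF assms(2) id_measurable_lebesgue_borel] fst_borel]
    by (simp add: comp_def)
  have [measurable]: "g \<in> borel_measurable M"
    by (rule measurable_compose[OF assms(3) id_measurable_lebesgue_borel])
  have [measurable]: "(\<lambda>q. \<mu> (f q)) \<in> borel_measurable M"
    by (rule measurable_compose[OF assms(2,1)])
  show ?thesis unfolding paced_value_def by measurable
qed

locale pacing_market = G: prob_space G
  for G :: "((real^'d) \<times> real) measure" +
  fixes \<mu> :: "(real^'d) \<times> real \<Rightarrow> real" and r :: "real^'d \<Rightarrow> real" and n :: nat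
  assumes sets_G: "sets G = sets lebesgue"
    and measurable_\<mu>: "\<mu> \<in> borel_measurable lebesgue"
    and measurable_r: "r \<in> borel_measurable lebesgue"
begin

lemma space_G: "space G = UNIV"
  using sets_eq_imp_space_eq[OF sets_G] by simp

lemma measurable_paced_value_G: "(\<lambda>\<theta>. paced_value \<mu> \<theta> \<alpha>) \<in> borel_measurable G"
  using measurable_paced_value[OF measurable_\<mu>, of "\<lambda>\<theta>. \<theta>" lebesgue "\<lambda>_. \<alpha>"]
    measurable_cong_sets[OF sets_G refl]
  by auto

lemma prob_space_lam: "prob_space (lam G \<mu> \<alpha>)"
  unfolding lam_def paced_value_def[symmetric]
  by (rule G.prob_space_distr[OF measurable_paced_value_G])

lemma sets_lam: "sets (lam G \<mu> \<alpha>) = sets borel"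
  unfolding lam_def by simp

lemma Hfun_eq: "Hfun n G \<mu> \<alpha> x = measure G {\<theta>. paced_value \<mu> \<theta> \<alpha> \<le> x} ^ (n - 1)"
  unfolding Hfun_def lam_def paced_value_def[symmetric]
  by (subst measure_distr[OF measurable_paced_value_G]) (auto simp: space_G vimage_def)

lemma Hfun_eq_measure_atMost: "Hfun n G \<mu> \<alpha> = (\<lambda>x. measure (lam G \<mu> \<alpha>) {..x} ^ (n - 1))"
  by (simp add: Hfun_def fun_eq_iff)

lemma mono_Hfun: "mono (Hfun n G \<mu> \<alpha>)"
proof -
  interpret prob_space "lam G \<mu> \<alpha>" by (rule prob_space_lam)
  show ?thesis unfolding Hfun_eq_measure_atMost
    by (rule mono_measure_atMost_power[OF finite_measure_axioms sets_lam])
qed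

lemma Hfun_nonneg: "0 \<le> Hfun n G \<mu> \<alpha> x" and Hfun_le_1: "Hfun n G \<mu> \<alpha> x \<le> 1"
  unfolding Hfun_eq by (auto intro: power_le_one)

lemma sigma_fun_eq_shade: "sigma_fun n G r \<mu> \<alpha> x = shade (Hfun n G \<mu> \<alpha>) (r \<alpha>) x"
  unfolding sigma_fun_def shade_def by simp

lemma sigma_fun_nonneg: "0 \<le> x \<Longrightarrow> 0 \<le> r \<alpha> \<Longrightarrow> 0 \<le> sigma_fun n G r \<mu> \<alpha> x"
  using shade_bounds(1)[OF mono_Hfun[of \<alpha>] Hfun_nonneg[of \<alpha>], of "r \<alpha>" x]
  by (cases "x < r \<alpha>") (auto simp: sigma_fun_eq_shade shade_def)

lemma measurable_Hfun: "(\<lambda>p. Hfun n G \<mu> (fst p) (snd p)) \<in> borel_measurable (lebesgue \<Otimes>\<^sub>M borel)"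
proof -
  let ?N = "lebesgue \<Otimes>\<^sub>M (borel :: real measure)"
  let ?Q = "{q \<in> space (?N \<Otimes>\<^sub>M G). paced_value \<mu> (snd q) (fst (fst q)) \<le> snd (fst q)}"
  have [measurable]: "(\<lambda>q. paced_value \<mu> (snd q) (fst (fst q))) \<in> borel_measurable (?N \<Otimes>\<^sub>M G)"
    by (rule measurable_paced_value[OF measurable_\<mu>])
      (auto simp: measurable_cong_sets[OF refl sets_G, symmetric])
  have "?Q \<in> sets (?N \<Otimes>\<^sub>M G)" by measurable
  then have "(\<lambda>p. emeasure G (Pair p -` ?Q)) \<in> borel_measurable ?N"
    by (rule G.measurable_emeasure_Pair)
  moreover have "Pair p -` ?Q = {\<theta>. paced_value \<mu> \<theta> (fst p) \<le> snd p}" for p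
    by (auto simp: space_pair_measure space_G)
  ultimately have "(\<lambda>p. emeasure G {\<theta>. paced_value \<mu> \<theta> (fst p) \<le> snd p}) \<in> borel_measurable ?N"
    by simp
  then have "(\<lambda>p. enn2real (emeasure G {\<theta>. paced_value \<mu> \<theta> (fst p) \<le> snd p}) ^ (n - 1))
      \<in> borel_measurable ?N"
    by measurable
  then show ?thesis unfolding Hfun_eq measure_def .
qed

lemma integral_Hfun_eq_lborel:
  "integral {a..b} (Hfun n G \<mu> \<alpha>) = (\<integral>s. indicator {a..b} s * Hfun n G \<mu> \<alpha> s \<partial>lborel)"
proof -
  have "set_integrable lborel {a..b} (Hfun n G \<mu> \<alpha>)"
    unfolding set_integrable_def
  proof (rule integrableI_bounded_set[where A="{a..b}" and B=1])
    show "(\<lambda>x. indicator {a..b} x *\<^sub>R Hfun n G \<mu> \<alpha> x) \<in> borel_measurable lborel"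
      using borel_measurable_mono[OF mono_Hfun] by measurable
  qed (auto simp: Hfun_nonneg Hfun_le_1 emeasure_lborel_Icc_eq)
  from set_borel_integral_eq_integral(2)[OF this] show ?thesis
    by (simp add: set_lebesgue_integral_def)
qed

lemma measurable_integral_Hfun:
  "(\<lambda>p. integral {r (fst p)..snd p} (Hfun n G \<mu> (fst p))) \<in> borel_measurable (lebesgue \<Otimes>\<^sub>M borel)"
proof -
  let ?N = "lebesgue \<Otimes>\<^sub>M (borel :: real measure)"
  have "(\<lambda>q. (fst (fst q), snd q)) \<in> (?N \<Otimes>\<^sub>M borel) \<rightarrow>\<^sub>M ?N"
    by measurable
  from measurable_compose[OF this measurable_Hfun]
  have [measurable]: "(\<lambda>q. Hfun n G \<mu> (fst (fst q)) (snd q)) \<in> borel_measurable (?N \<Otimes>\<^sub>M borel)"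
    by simp
  have [measurable]: "r \<in> borel_measurable lebesgue" by (rule measurable_r)
  have "(\<lambda>q. if r (fst (fst q)) \<le> snd q \<and> snd q \<le> snd (fst q) then Hfun n G \<mu> (fst (fst q)) (snd q) else 0)
      \<in> borel_measurable (?N \<Otimes>\<^sub>M borel)"
    by measurable
  then have "(\<lambda>q. indicator {r (fst (fst q))..snd (fst q)} (snd q) * Hfun n G \<mu> (fst (fst q)) (snd q))
      \<in> borel_measurable (?N \<Otimes>\<^sub>M lborel)"
    by (simp add: indicator_def if_distrib[of "\<lambda>c. c * _"]
        measurable_cong_sets[OF sets_pair_measure_cong[OF refl sets_lborel] refl] cong: conj_cong)
  then have "(\<lambda>p. \<integral>s. indicator {r (fst p)..snd p} s * Hfun n G \<mu> (fst p) s \<partial>lborel) \<in> borel_measurable ?N"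
    by (intro sigma_finite_measure.borel_measurable_lebesgue_integral[OF sigma_finite_lborel])
      (simp add: split_beta')
  then show ?thesis by (simp add: integral_Hfun_eq_lborel)
qed

lemma measurable_sigma_fun:
  assumes "a \<in> M \<rightarrow>\<^sub>M lebesgue" "x \<in> borel_measurable M"
  shows "(\<lambda>q. sigma_fun n G r \<mu> (a q) (x q)) \<in> borel_measurable M"
proof -
  have [measurable]: "r \<in> borel_measurable lebesgue" by (rule measurable_r)
  note [measurable] = measurable_Hfun measurable_integral_Hfun
  have "(\<lambda>p. sigma_fun n G r \<mu> (fst p) (snd p)) \<in> borel_measurable (lebesgue \<Otimes>\<^sub>M borel)"
    unfolding sigma_fun_eq_shade shade_def by measurable
  from measurable_compose[OF _ this, of "\<lambda>q. (a q, x q)"] show ?thesis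
    using assms by simp
qed

lemma measurable_beta_fun:
  assumes "th \<in> M \<rightarrow>\<^sub>M lebesgue" "a \<in> M \<rightarrow>\<^sub>M lebesgue"
  shows "(\<lambda>q. beta_fun n G r \<mu> (th q) (a q)) \<in> borel_measurable M"
  unfolding beta_fun_def paced_value_def[symmetric]
  by (rule measurable_sigma_fun[OF assms(2) measurable_paced_value[OF measurable_\<mu> assms]])

lemma sets_beta_fun_le: "{\<theta>. beta_fun n G r \<mu> \<theta> \<alpha> \<le> c} \<in> sets G"
proof -
  have [measurable]: "(\<lambda>\<theta>. beta_fun n G r \<mu> \<theta> \<alpha>) \<in> borel_measurable G"
    using measurable_beta_fun[of "\<lambda>\<theta>. \<theta>" lebesgue "\<lambda>_. \<alpha>"] measurable_cong_sets[OF sets_G refl]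
    by auto
  have "{\<theta> \<in> space G. beta_fun n G r \<mu> \<theta> \<alpha> \<le> c} \<in> sets G" by measurable
  then show ?thesis by (simp add: space_G)
qed

section \<open>Optimality of the shaded bid for a single item\<close>

definition win_prob :: "real^'d \<Rightarrow> real \<Rightarrow> real" where
  "win_prob \<alpha> b = (if r \<alpha> \<le> b then 1 else 0) * measure G {\<theta>. beta_fun n G r \<mu> \<theta> \<alpha> \<le> b} ^ (n - 1)"

lemma win_prob_nonneg: "0 \<le> win_prob \<alpha> b"
  unfolding win_prob_def by simp

lemma measure_beta_fun_le_eq:
  "measure G {\<theta>. beta_fun n G r \<mu> \<theta> \<alpha> \<le> c} = measure (lam G \<mu> \<alpha>) {x. sigma_fun n G r \<mu> \<alpha> x \<le> c}"
proof -
  have "sigma_fun n G r \<mu> \<alpha> \<in> borel_measurable borel"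
    unfolding sigma_fun_eq_shade
    by (rule borel_measurable_mono[OF mono_shade[OF mono_Hfun[of \<alpha>] Hfun_nonneg[of \<alpha>]]])
  then have "{x. sigma_fun n G r \<mu> \<alpha> x \<le> c} \<in> sets borel" by measurable
  then show ?thesis
    unfolding lam_def paced_value_def[symmetric]
    by (subst measure_distr[OF measurable_paced_value_G])
      (simp_all add: beta_fun_def paced_value_def space_G vimage_def)
qed

lemma gain_le_sigma_fun_gain:
  "(v - b) * win_prob \<alpha> b \<le> (v - sigma_fun n G r \<mu> \<alpha> v) * win_prob \<alpha> (sigma_fun n G r \<mu> \<alpha> v)"
  using shade_maximizes_gain[OF prob_space_lam sets_lam Hfun_eq_measure_atMost, of v b "r \<alpha>"]
  by (simp add: win_prob_def measure_beta_fun_le_eq sigma_fun_eq_shade mult.assoc)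

lemma sigma_fun_le_of_reserve_le: "r \<alpha> \<le> sigma_fun n G r \<mu> \<alpha> x \<Longrightarrow> sigma_fun n G r \<mu> \<alpha> x \<le> x"
  using shade_bounds(2)[OF mono_Hfun[of \<alpha>] Hfun_nonneg[of \<alpha>], of "r \<alpha>" x]
  by (cases "x < r \<alpha>") (simp_all add: sigma_fun_eq_shade shade_def)

lemma payoff_sigma_fun_nonneg: "0 \<le> payoff n G r \<mu> v (\<lambda>\<alpha>. sigma_fun n G r \<mu> \<alpha> (v \<alpha>)) z"
  using sigma_fun_le_of_reserve_le[of "fst z" "v (fst z)"] by (simp add: payoff_def Let_def)

end

section \<open>Expected utility over items and rivals\<close>

lemma payoff_le_of_nonneg_bid:
  "0 \<le> b (fst z) \<Longrightarrow> v (fst z) \<le> c \<Longrightarrow> 0 \<le> c \<Longrightarrow> payoff n G r \<mu> v b z \<le> c"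
  by (cases z) (simp add: payoff_def)

locale pacing_auction = pacing_market G \<mu> r n + F: prob_space F
  for G :: "((real^'d) \<times> real) measure" and \<mu> r n and F :: "(real^'d) measure" +
  assumes sets_F: "sets F = sets lebesgue"
begin

abbreviation rivals :: "(nat \<Rightarrow> (real^'d) \<times> real) measure" where
  "rivals \<equiv> PiM {..<n - 1} (\<lambda>_. G)"

abbreviation auction :: "((real^'d) \<times> (nat \<Rightarrow> (real^'d) \<times> real)) measure" where
  "auction \<equiv> F \<Otimes>\<^sub>M rivals"

sublocale R: prob_space rivals
  by (rule prob_space_PiM) (rule G.prob_space_axioms)

lemma prob_space_auction: "prob_space auction"
  by (rule prob_space_pair[OF F.prob_space_axioms R.prob_space_axioms])

lemma AE_auction_fst:
  assumes "{\<alpha> \<in> space F. P \<alpha>} \<in> sets F" "AE \<alpha> in F. P \<alpha>"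
  shows "AE z in auction. P (fst z)"
proof -
  interpret pair_sigma_finite F rivals
    by (intro pair_sigma_finite.intro F.sigma_finite_measure_axioms R.sigma_finite_measure_axioms)
  show ?thesis
  proof (rule AE_pair_measure)
    show "{z \<in> space auction. P (fst z)} \<in> sets auction"
      using assms(1) by measurable
  qed (use assms(2) in simp)
qed

lemma measurable_payoff:
  assumes b: "b \<in> borel_measurable lebesgue" and v: "v \<in> borel_measurable lebesgue"
  shows "payoff n G r \<mu> v b \<in> borel_measurable auction"
proof -
  have fst: "fst \<in> auction \<rightarrow>\<^sub>M lebesgue"
    using measurable_fst[of F rivals] measurable_cong_sets[OF refl sets_F] by blast
  have rival: "(\<lambda>z. snd z i) \<in> auction \<rightarrow>\<^sub>M lebesgue" if "i < n - 1" for i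
  proof -
    have "(\<lambda>z. snd z i) \<in> auction \<rightarrow>\<^sub>M G"
      by (rule measurable_compose[OF measurable_snd measurable_component_singleton]) (use that in auto)
    then show ?thesis using measurable_cong_sets[OF refl sets_G] by blast
  qed
  have [measurable]: "(\<lambda>z. b (fst z)) \<in> borel_measurable auction"
    "(\<lambda>z. v (fst z)) \<in> borel_measurable auction" "(\<lambda>z. r (fst z)) \<in> borel_measurable auction"
    using measurable_compose[OF fst] b v measurable_r by auto
  have "Measurable.pred auction (\<lambda>z. beta_fun n G r \<mu> (snd z i) (fst z) \<le> b (fst z))"
    if "i \<in> {..<n - 1}" for i
  proof -
    have [measurable]: "(\<lambda>z. beta_fun n G r \<mu> (snd z i) (fst z)) \<in> borel_measurable auction"
      using measurable_beta_fun[OF rival fst] that by simp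
    show ?thesis by measurable
  qed
  then have [measurable]:
    "Measurable.pred auction (\<lambda>z. \<forall>i\<in>{..<n - 1}. beta_fun n G r \<mu> (snd z i) (fst z) \<le> b (fst z))"
    by (intro pred_intros_finite) auto
  show ?thesis unfolding payoff_def Let_def lessThan_iff[symmetric] Ball_def[symmetric]
    by measurable
qed

lemma nn_integral_rivals_win:
  "(\<integral>\<^sup>+\<theta>s. ennreal (d * (if r \<alpha> \<le> c \<and> (\<forall>i<n - 1. beta_fun n G r \<mu> (\<theta>s i) \<alpha> \<le> c) then 1 else 0)) \<partial>rivals)
    = ennreal d * ennreal (win_prob \<alpha> c)"
proof (cases "r \<alpha> \<le> c")
  case True
  define S where "S = {\<theta>. beta_fun n G r \<mu> \<theta> \<alpha> \<le> c}"
  have S: "S \<in> sets G" unfolding S_def by (rule sets_beta_fun_le)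
  have "(\<integral>\<^sup>+\<theta>s. ennreal (d * (if r \<alpha> \<le> c \<and> (\<forall>i<n - 1. beta_fun n G r \<mu> (\<theta>s i) \<alpha> \<le> c) then 1 else 0)) \<partial>rivals)
      = (\<integral>\<^sup>+\<theta>s. ennreal d * indicator (\<Pi>\<^sub>E i\<in>{..<n - 1}. S) \<theta>s \<partial>rivals)"
    by (rule nn_integral_cong) (auto simp: space_PiM S_def True PiE_iff indicator_def)
  also have "\<dots> = ennreal d * emeasure rivals (\<Pi>\<^sub>E i\<in>{..<n - 1}. S)"
    by (rule nn_integral_cmult_indicator) (simp add: S sets_PiM_I_finite)
  also have "emeasure rivals (\<Pi>\<^sub>E i\<in>{..<n - 1}. S) = ennreal (measure G S ^ (n - 1))"
    using S product_sigma_finite.emeasure_PiM[of "\<lambda>_. G" "{..<n - 1}" "\<lambda>_. S"]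
    by (simp add: product_sigma_finite_def G.sigma_finite_measure_axioms G.emeasure_eq_measure ennreal_power)
  finally show ?thesis using True by (simp add: win_prob_def S_def)
qed (simp add: win_prob_def)

text \<open>No finiteness of the negative part is needed: a large negative part only lowers the
  left-hand side.\<close>

lemma ext_expect_payoff_le_nn_integral_sigma_fun:
  assumes b: "b \<in> borel_measurable lebesgue" and v: "v \<in> borel_measurable lebesgue"
    and bs_def: "bs = (\<lambda>\<alpha>. sigma_fun n G r \<mu> \<alpha> (v \<alpha>))"
    and finite: "(\<integral>\<^sup>+ z. ennreal (payoff n G r \<mu> v b z) \<partial>auction) < \<top>"
  shows "ext_expect auction (payoff n G r \<mu> v b)
    \<le> enn2ereal (\<integral>\<^sup>+ z. ennreal (payoff n G r \<mu> v bs z) \<partial>auction)"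
proof -
  have bs: "bs \<in> borel_measurable lebesgue"
    unfolding bs_def by (rule measurable_sigma_fun[OF _ v]) auto
  have iterated: "(\<integral>\<^sup>+ z. ennreal (p z) \<partial>auction) = (\<integral>\<^sup>+ \<alpha>. \<integral>\<^sup>+ \<theta>s. ennreal (p (\<alpha>, \<theta>s)) \<partial>rivals \<partial>F)"
    and inner_measurable: "(\<lambda>\<alpha>. \<integral>\<^sup>+ \<theta>s. ennreal (p (\<alpha>, \<theta>s)) \<partial>rivals) \<in> borel_measurable F"
    if "p \<in> borel_measurable auction" for p
    using R.nn_integral_fst[of "\<lambda>z. ennreal (p z)"] R.borel_measurable_nn_integral_fst[of "\<lambda>z. ennreal (p z)"]
      that by auto
  have inner_payoff: "(\<integral>\<^sup>+ \<theta>s. ennreal (s * payoff n G r \<mu> v c (\<alpha>, \<theta>s)) \<partial>rivals)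
      = ennreal (s * (v \<alpha> - c \<alpha>) * win_prob \<alpha> (c \<alpha>))" for s :: real and c \<alpha>
    using nn_integral_rivals_win[of "s * (v \<alpha> - c \<alpha>)" \<alpha> "c \<alpha>"]
    by (simp add: payoff_def ennreal_mult''[symmetric] win_prob_nonneg mult.assoc)
  have pointwise: "(\<integral>\<^sup>+ \<theta>s. ennreal (payoff n G r \<mu> v b (\<alpha>, \<theta>s)) \<partial>rivals)
      \<le> (\<integral>\<^sup>+ \<theta>s. ennreal (payoff n G r \<mu> v bs (\<alpha>, \<theta>s)) \<partial>rivals)
       + (\<integral>\<^sup>+ \<theta>s. ennreal (- payoff n G r \<mu> v b (\<alpha>, \<theta>s)) \<partial>rivals)" for \<alpha>
    using inner_payoff[of 1 _ \<alpha>] inner_payoff[of "-1" b \<alpha>] gain_le_sigma_fun_gain[of "v \<alpha>" "b \<alpha>" \<alpha>]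
    by (simp add: bs_def add_increasing2 ennreal_leI)
  have pb: "payoff n G r \<mu> v b \<in> borel_measurable auction"
    and pb_neg: "(\<lambda>z. - payoff n G r \<mu> v b z) \<in> borel_measurable auction"
    and pbs: "payoff n G r \<mu> v bs \<in> borel_measurable auction"
    using measurable_payoff[OF b v] measurable_payoff[OF bs v] by auto
  have "(\<integral>\<^sup>+ z. ennreal (payoff n G r \<mu> v b z) \<partial>auction)
      \<le> (\<integral>\<^sup>+ \<alpha>. (\<integral>\<^sup>+ \<theta>s. ennreal (payoff n G r \<mu> v bs (\<alpha>, \<theta>s)) \<partial>rivals)
         + (\<integral>\<^sup>+ \<theta>s. ennreal (- payoff n G r \<mu> v b (\<alpha>, \<theta>s)) \<partial>rivals) \<partial>F)"
    unfolding iterated[OF pb] by (rule nn_integral_mono) (rule pointwise)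
  also have "\<dots> = (\<integral>\<^sup>+ z. ennreal (payoff n G r \<mu> v bs z) \<partial>auction)
      + (\<integral>\<^sup>+ z. ennreal (- payoff n G r \<mu> v b z) \<partial>auction)"
    unfolding iterated[OF pbs] iterated[OF pb_neg]
    by (rule nn_integral_add) (use inner_measurable[OF pbs] inner_measurable[OF pb_neg] in auto)
  finally show ?thesis unfolding ext_expect_def by (rule enn2ereal_diff_le[OF finite])
qed

lemma integrable_payoff_sigma_fun:
  assumes "v \<in> borel_measurable lebesgue"
    and bs_def: "bs = (\<lambda>\<alpha>. sigma_fun n G r \<mu> \<alpha> (v \<alpha>))"
    and "AE z in auction. payoff n G r \<mu> v bs z \<le> c"
  shows "integrable auction (payoff n G r \<mu> v bs)"
proof (rule finite_measure.integrable_const_bound)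
  show "finite_measure auction"
    using prob_space_auction by (rule prob_space.axioms(1))
  show "AE z in auction. norm (payoff n G r \<mu> v bs z) \<le> c"
    using assms(3) by eventually_elim (simp add: bs_def payoff_sigma_fun_nonneg)
  show "payoff n G r \<mu> v bs \<in> borel_measurable auction"
    unfolding bs_def by (intro measurable_payoff measurable_sigma_fun assms(1)) auto
qed

lemma ext_expect_payoff_le_integral_sigma_fun:
  assumes "b \<in> borel_measurable lebesgue" "v \<in> borel_measurable lebesgue"
    and bs_def: "bs = (\<lambda>\<alpha>. sigma_fun n G r \<mu> \<alpha> (v \<alpha>))"
    and "AE z in auction. payoff n G r \<mu> v b z \<le> c" "integrable auction (payoff n G r \<mu> v bs)"
  shows "ext_expect auction (payoff n G r \<mu> v b) \<le> ereal (\<integral>z. payoff n G r \<mu> v bs z \<partial>auction)"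
proof -
  have "0 \<le> payoff n G r \<mu> v bs z" for z
    by (simp add: bs_def payoff_sigma_fun_nonneg)
  then have "ereal (\<integral>z. payoff n G r \<mu> v bs z \<partial>auction) = enn2ereal (\<integral>\<^sup>+ z. ennreal (payoff n G r \<mu> v bs z) \<partial>auction)"
    using nn_integral_eq_integral[OF assms(5)] Bochner_Integration.integral_nonneg[of auction "payoff n G r \<mu> v bs"]
    by simp
  moreover have "(\<integral>\<^sup>+ z. ennreal (payoff n G r \<mu> v b z) \<partial>auction) < \<top>"
    by (rule nn_integral_bounded_less_top[OF prob_space_auction assms(4)])
  ultimately show ?thesis
    using ext_expect_payoff_le_nn_integral_sigma_fun[OF assms(1-3)] by simp
qed


lemma sigma_fun_optimal:
  assumes v: "v \<in> borel_measurable lebesgue"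
    and A: "A \<in> sets F" "AE \<alpha> in F. \<alpha> \<in> A"
    and v_A: "\<And>\<alpha>. \<alpha> \<in> A \<Longrightarrow> 0 \<le> v \<alpha> \<and> v \<alpha> \<le> c" and r_A: "\<And>\<alpha>. \<alpha> \<in> A \<Longrightarrow> 0 \<le> r \<alpha>"
    and bs_def: "bs = (\<lambda>\<alpha>. sigma_fun n G r \<mu> \<alpha> (v \<alpha>))"
  shows "bs \<in> borel_measurable lebesgue \<and> (\<forall>\<alpha>\<in>A. 0 \<le> bs \<alpha>)
      \<and> integrable auction (payoff n G r \<mu> v bs)
      \<and> (\<forall>b. b \<in> borel_measurable lebesgue \<longrightarrow> (\<forall>\<alpha>\<in>A. 0 \<le> b \<alpha>) \<longrightarrow>
          ext_expect auction (payoff n G r \<mu> v b) \<le> ereal (\<integral>z. payoff n G r \<mu> v bs z \<partial>auction))"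
proof (intro conjI allI impI)
  show "bs \<in> borel_measurable lebesgue"
    unfolding bs_def by (rule measurable_sigma_fun[OF _ v]) auto
  show bs_A: "\<forall>\<alpha>\<in>A. 0 \<le> bs \<alpha>"
    using v_A r_A unfolding bs_def by (simp add: sigma_fun_nonneg)
  have "AE z in auction. fst z \<in> A"
    using A by (intro AE_auction_fst) simp_all
  then have payoff_bounded: "AE z in auction. payoff n G r \<mu> v b z \<le> c" if "\<forall>\<alpha>\<in>A. 0 \<le> b \<alpha>" for b
  proof eventually_elim
    case (elim z)
    show ?case using that v_A[OF elim] elim by (intro payoff_le_of_nonneg_bid) auto
  qed
  show "integrable auction (payoff n G r \<mu> v bs)"
    by (rule integrable_payoff_sigma_fun[OF v bs_def payoff_bounded[OF bs_A]])
  then show "ext_expect auction (payoff n G r \<mu> v b) \<le> ereal (\<integral>z. payoff n G r \<mu> v bs z \<partial>auction)"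
    if "b \<in> borel_measurable lebesgue" "\<forall>\<alpha>\<in>A. 0 \<le> b \<alpha>" for b
    by (rule ext_expect_payoff_le_integral_sigma_fun[OF that(1) v bs_def payoff_bounded[OF that(2)]])
qed

end

theorem lemma2:
  fixes n :: nat and U Bmin \<omega> t :: real
    and A :: "(real^'d) set"
    and f :: "real^'d \<Rightarrow> real" and F :: "(real^'d) measure"
    and g :: "(real^'d) \<times> real \<Rightarrow> real" and G :: "((real^'d) \<times> real) measure"
    and r :: "real^'d \<Rightarrow> real"
    and \<mu> :: "(real^'d) \<times> real \<Rightarrow> real"
    and w :: "real^'d" and B :: real
  assumes n: "n \<ge> 2" and d: "CARD('d) \<ge> 2"
    and U: "U > 0" and Bmin: "Bmin > 0"
    and A_pos: "A \<subseteq> {\<alpha>. \<forall>i. 0 < \<alpha> $ i}" and A_meas: "A \<in> sets lebesgue"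
    and f_meas: "f \<in> borel_measurable lebesgue" and f_nonneg: "\<And>\<alpha>. f \<alpha> \<ge> 0"
    and f_A: "\<And>\<alpha>. \<alpha> \<notin> A \<Longrightarrow> f \<alpha> = 0"
    and F_def: "F = density lebesgue (\<lambda>\<alpha>. ennreal (f \<alpha>))" and F_prob: "prob_space F"
    and g_meas: "g \<in> borel_measurable lebesgue" and g_nonneg: "\<And>\<theta>. g \<theta> \<ge> 0"
    and g_Theta: "\<And>\<theta>. \<theta> \<notin> Theta U Bmin \<Longrightarrow> g \<theta> = 0"
    and G_def: "G = density lebesgue (\<lambda>\<theta>. ennreal (g \<theta>))" and G_prob: "prob_space G"
    and \<omega>: "\<omega> > 0" "\<And>w' \<alpha>. w' \<in> Theta_w U \<Longrightarrow> \<alpha> \<in> A \<Longrightarrow> w' \<bullet> \<alpha> \<le> \<omega>"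
    and r_meas: "r \<in> borel_measurable lebesgue" and r_pos: "\<And>\<alpha>. \<alpha> \<in> A \<Longrightarrow> r \<alpha> > 0"
    and \<mu>_meas: "\<mu> \<in> borel_measurable lebesgue"
    and \<mu>_nonneg: "\<And>\<theta>. \<theta> \<in> Theta U Bmin \<Longrightarrow> \<mu> \<theta> \<ge> 0"
    and wB: "(w, B) \<in> Theta U Bmin" and t: "t \<ge> 0"
  shows
    "let M = F \<Otimes>\<^sub>M PiM {..<n - 1} (\<lambda>_. G);
         v = (\<lambda>\<alpha>. (w \<bullet> \<alpha>) / (1 + t));
         bstar = (\<lambda>\<alpha>. sigma_fun n G r \<mu> \<alpha> (v \<alpha>))
     in bstar \<in> borel_measurable lebesgue \<and> (\<forall>\<alpha>\<in>A. bstar \<alpha> \<ge> 0)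
        \<and> integrable M (payoff n G r \<mu> v bstar)
        \<and> (\<forall>b. b \<in> borel_measurable lebesgue \<longrightarrow> (\<forall>\<alpha>\<in>A. b \<alpha> \<ge> 0) \<longrightarrow>
              ext_expect M (payoff n G r \<mu> v b) \<le> ereal (\<integral>z. payoff n G r \<mu> v bstar z \<partial>M))"
proof -
  interpret pacing_auction G \<mu> r n F
    by (intro pacing_auction.intro pacing_market.intro pacing_market_axioms.intro
        pacing_auction_axioms.intro G_prob F_prob \<mu>_meas r_meas) (simp_all add: G_def F_def)
  define v where "v = (\<lambda>\<alpha>::real^'d. (w \<bullet> \<alpha>) / (1 + t))"
  have "v \<in> borel_measurable borel"
    unfolding v_def by measurable
  then have v_meas: "v \<in> borel_measurable lebesgue"
    using measurable_compose[OF id_measurable_lebesgue_borel] by blast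
  have v_A: "0 \<le> v \<alpha> \<and> v \<alpha> \<le> \<omega>" if "\<alpha> \<in> A" for \<alpha>
  proof -
    have "0 < w \<bullet> \<alpha>"
      unfolding inner_vec_def using wB A_pos that by (intro sum_pos) (auto simp: Theta_def)
    moreover have "w \<bullet> \<alpha> \<le> \<omega>"
      using \<omega>(2) wB that by (simp add: Theta_def Theta_w_def)
    moreover have "w \<bullet> \<alpha> / (1 + t) \<le> w \<bullet> \<alpha>"
      using \<open>0 < w \<bullet> \<alpha>\<close> t by (simp add: divide_le_eq)
    ultimately show ?thesis
      using t unfolding v_def by auto
  qed
  have "\<alpha> \<in> A" if "0 < f \<alpha>" for \<alpha>
    using f_A[of \<alpha>] that by fastforce
  then have "AE \<alpha> in F. \<alpha> \<in> A"
    unfolding F_def using f_meas by (subst AE_density) (auto intro!: AE_I2)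
  then show ?thesis
    unfolding Let_def
    using sigma_fun_optimal[OF v_meas _ _ v_A r_pos[THEN less_imp_le] refl] A_meas
    by (simp add: F_def v_def)
qed

end
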